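(* Let $k,\ell,n$ be integers with $2\le \ell<k/2$ and $n\ge1$, and let the sets $A_i,B_i,U_i$, $V$ and the $k$-graph $H_1^2$ be as in the context. Then every $(\ell,k)$-path all of whose edges belong to $H_1^2$ has at most two edges.
   Context: Let $\{A_i,B_i: i=1,\dots,2n\}$ be $4n$ pairwise disjoint finite sets with $|A_i|=2\lfloor k/2\rfloor+\ell$ for $1\le i\le n$ and $|A_i|=2k-2\ell-3$ for $n+1\le i\le 2n$. Put $U_i=A_i\cup B_i$ and $V=\bigcup_{i=1}^{2n}U_i$. For $S\subseteq V$ let $tr(S)=\{i: S\cap U_i\ne\emptyset\}$. Define $H_1^2$ as the set of all $k$-subsets $e\subseteq V$ for which there is $i\in\{1,\dots,n\}$ with $tr(e)=\{i,n+i\}$, $|A_i\cap e|=\ell+1$ and $|A_{n+i}\cap e|=k-\ell-1$. An $(\ell,k)$-path is a $k$-graph with distinct vertices $v_1,\dots,v_s$, $s\equiv\ell\pmod{k-\ell}$, $s\ge k$, and edges $\{v_{i(k-\ell)+1},\dots,v_{i(k-\ell)+k}\}$, $i=0,\dots,(s-k)/(k-\ell)$. *)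

theory Defs
  imports Main
begin

definition Uset :: "(nat \<Rightarrow> 'a set) \<Rightarrow> (nat \<Rightarrow> 'a set) \<Rightarrow> nat \<Rightarrow> 'a set" where
  "Uset A B i = A i \<union> B i"

definition Vset :: "nat \<Rightarrow> (nat \<Rightarrow> 'a set) \<Rightarrow> (nat \<Rightarrow> 'a set) \<Rightarrow> 'a set" where
  "Vset n A B = (\<Union>i\<in>{1..2*n}. Uset A B i)"

definition tr :: "nat \<Rightarrow> (nat \<Rightarrow> 'a set) \<Rightarrow> (nat \<Rightarrow> 'a set) \<Rightarrow> 'a set \<Rightarrow> nat set" where
  "tr n A B S = {i\<in>{1..2*n}. S \<inter> Uset A B i \<noteq> {}}"

definition H12 :: "nat \<Rightarrow> nat \<Rightarrow> nat \<Rightarrow> (nat \<Rightarrow> 'a set) \<Rightarrow> (nat \<Rightarrow> 'a set) \<Rightarrow> 'a set set" where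
  "H12 k l n A B = {e. e \<subseteq> Vset n A B \<and> finite e \<and> card e = k \<and>
      (\<exists>i\<in>{1..n}. tr n A B e = {i, n+i} \<and> card (A i \<inter> e) = l+1
                    \<and> card (A (n+i) \<inter> e) = k-l-1)}"

text \<open>An (l,k)-path given by its vertex sequence vs = [v_1,...,v_s] (0-based list).\<close>
definition is_lk_path :: "nat \<Rightarrow> nat \<Rightarrow> 'a list \<Rightarrow> bool" where
  "is_lk_path l k vs \<longleftrightarrow> distinct vs \<and> length vs \<ge> k \<and>
      length vs mod (k-l) = l mod (k-l)"

definition path_edges :: "nat \<Rightarrow> nat \<Rightarrow> 'a list \<Rightarrow> 'a set set" where
  "path_edges l k vs =
     (\<lambda>i. set (take k (drop (i*(k-l)) vs))) ` {0..(length vs - k) div (k-l)}"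

end

theory Submission
  imports Defs
begin

text \<open>Consecutive edges of an \<open>(\<ell>,k)\<close>-path share a vertex, while edges two apart are disjoint
  because \<open>2\<ell> < k\<close>. An edge of \<open>H\<^sub>1\<^sup>2\<close> lies in \<open>A\<^sub>i \<union> A\<^sub>n\<^sub>+\<^sub>i\<close> for a single \<open>i\<close>, and intersecting
  edges must use the same \<open>i\<close>. So three consecutive edges use one block, and the disjoint first and
  third edge would put \<open>2(k-\<ell>-1)\<close> vertices into \<open>A\<^sub>n\<^sub>+\<^sub>i\<close>, which has only \<open>2k-2\<ell>-3\<close>.\<close>

lemma segments_meet:
  assumes "a \<le> b" "b < a + k" "b < length vs"
  shows "set (take k (drop a vs)) \<inter> set (take k (drop b vs)) \<noteq> {}"
proof -
  have "vs ! b \<in> set (take k (drop a vs))"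
    using assms by (auto simp: in_set_conv_nth intro!: exI[of _ "b - a"])
  moreover have "vs ! b \<in> set (take k (drop b vs))"
    using assms by (auto simp: in_set_conv_nth intro!: exI[of _ 0])
  ultimately show ?thesis by blast
qed

lemma segments_disjoint:
  assumes "distinct vs" "a + k \<le> b"
  shows "set (take k (drop a vs)) \<inter> set (take k (drop b vs)) = {}"
proof -
  have "set (take k (drop a vs)) \<subseteq> set (take b vs)"
    using set_take_subset_set_take[OF assms(2), of vs] set_drop_subset[of a "take (a + k) vs"]
    by (auto simp: take_drop add.commute)
  moreover have "set (take k (drop b vs)) \<subseteq> set (drop b vs)"
    by (rule set_take_subset)
  moreover have "set (take b vs) \<inter> set (drop b vs) = {}"
    using assms(1) distinct_append[of "take b vs" "drop b vs"] by simp
  ultimately show ?thesis by blast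
qed

lemma path_edges_three_consecutive:
  assumes "is_lk_path l k vs" "0 < l" "2 * l < k" "2 < card (path_edges l k vs)"
  obtains e0 e1 e2 where "e0 \<in> path_edges l k vs" "e1 \<in> path_edges l k vs" "e2 \<in> path_edges l k vs"
    "e0 \<inter> e1 \<noteq> {}" "e1 \<inter> e2 \<noteq> {}" "e0 \<inter> e2 = {}"
proof -
  define d where "d = k - l"
  define m where "m = (length vs - k) div d"
  define E where "E j = set (take k (drop (j * d) vs))" for j
  have edges: "path_edges l k vs = E ` {0..m}"
    unfolding path_edges_def E_def m_def d_def ..
  have "card (E ` {0..m}) \<le> m + 1"
    using card_image_le[of "{0..m}" E] by simp
  hence "2 \<le> m" using assms(4) edges by simp
  hence "2 * d \<le> m * d" by simp
  also have "\<dots> \<le> length vs - k" unfolding m_def by simp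
  finally have len: "2 * d + k \<le> length vs" and d: "0 < d" "d < k"
    using assms(2,3) d_def by auto
  show thesis
  proof
    show "E 0 \<in> path_edges l k vs" "E 1 \<in> path_edges l k vs" "E 2 \<in> path_edges l k vs"
      using \<open>2 \<le> m\<close> edges by auto
    show "E 0 \<inter> E 1 \<noteq> {}"
      unfolding E_def using segments_meet[of 0 d k vs] d len by simp
    show "E 1 \<inter> E 2 \<noteq> {}"
      unfolding E_def using segments_meet[of d "2 * d" k vs] d len by simp
    show "E 0 \<inter> E 2 = {}"
      unfolding E_def using assms(1,3) d_def
      by (intro segments_disjoint) (auto simp: is_lk_path_def)
  qed
qed

lemma H12_edge_in_block:
  assumes "e \<in> H12 k l n A B" "2 * l < k"
    and "\<forall>i\<in>{1..2*n}. \<forall>j\<in>{1..2*n}. i \<noteq> j \<longrightarrow> A i \<inter> A j = {} \<and> B i \<inter> B j = {}"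
  obtains i where "i \<in> {1..n}" "e \<subseteq> A i \<union> A (n + i)" "card (A (n + i) \<inter> e) = k - l - 1"
proof -
  from assms(1) obtain i where i: "i \<in> {1..n}" and fin: "finite e" and ce: "card e = k"
    and ci: "card (A i \<inter> e) = l + 1" and cni: "card (A (n + i) \<inter> e) = k - l - 1"
    unfolding H12_def by blast
  have "A i \<inter> A (n + i) = {}" using assms(3) i by force
  hence "card ((A i \<inter> e) \<union> (A (n + i) \<inter> e)) = card e"
    using fin ci cni ce assms(2) by (subst card_Un_disjoint) auto
  hence "(A i \<inter> e) \<union> (A (n + i) \<inter> e) = e"
    using fin by (intro card_subset_eq) auto
  thus thesis using that i cni by blast
qed

lemma block_eq_if_meet:
  fixes i j n :: nat
  assumes "i \<in> {1..n}" "j \<in> {1..n}" "X \<subseteq> A i \<union> A (n + i)" "Y \<subseteq> A j \<union> A (n + j)"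
    "X \<inter> Y \<noteq> {}"
    and "\<forall>i\<in>{1..2*n}. \<forall>j\<in>{1..2*n}. i \<noteq> j \<longrightarrow> A i \<inter> A j = {}"
  shows "i = j"
proof (rule ccontr)
  assume "i \<noteq> j"
  hence "A i \<inter> A j = {}" "A i \<inter> A (n + j) = {}" "A (n + i) \<inter> A j = {}"
    "A (n + i) \<inter> A (n + j) = {}"
    using assms(1,2,6) by auto
  thus False using assms(3-5) by blast
qed

lemma H12_no_three_consecutive:
  assumes "2 \<le> l" "2 * l < k"
    and "\<forall>i\<in>{1..2*n}. finite (A i) \<and> finite (B i)"
    and "\<forall>i\<in>{1..2*n}. \<forall>j\<in>{1..2*n}. i \<noteq> j \<longrightarrow> A i \<inter> A j = {} \<and> B i \<inter> B j = {}"
    and "\<forall>i\<in>{n+1..2*n}. card (A i) = 2*k - 2*l - 3"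
    and "e0 \<in> H12 k l n A B" "e1 \<in> H12 k l n A B" "e2 \<in> H12 k l n A B"
    and "e0 \<inter> e1 \<noteq> {}" "e1 \<inter> e2 \<noteq> {}" "e0 \<inter> e2 = {}"
  shows False
proof -
  obtain i0 where i0: "i0 \<in> {1..n}" "e0 \<subseteq> A i0 \<union> A (n + i0)" "card (A (n + i0) \<inter> e0) = k - l - 1"
    using H12_edge_in_block[OF assms(6,2,4)] .
  obtain i1 where i1: "i1 \<in> {1..n}" "e1 \<subseteq> A i1 \<union> A (n + i1)"
    using H12_edge_in_block[OF assms(7,2,4)] .
  obtain i2 where i2: "i2 \<in> {1..n}" "e2 \<subseteq> A i2 \<union> A (n + i2)" "card (A (n + i2) \<inter> e2) = k - l - 1"
    using H12_edge_in_block[OF assms(8,2,4)] .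
  have disjA: "\<forall>i\<in>{1..2*n}. \<forall>j\<in>{1..2*n}. i \<noteq> j \<longrightarrow> A i \<inter> A j = {}"
    using assms(4) by blast
  have "i0 = i1" using block_eq_if_meet[OF i0(1) i1(1) i0(2) i1(2) assms(9) disjA] .
  moreover have "i1 = i2" using block_eq_if_meet[OF i1(1) i2(1) i1(2) i2(2) assms(10) disjA] .
  ultimately have i02: "i2 = i0" by simp
  let ?X = "A (n + i0)"
  have fin: "finite ?X" using assms(3) i0(1) by auto
  have "card (?X \<inter> e0) + card (?X \<inter> e2) = card ((?X \<inter> e0) \<union> (?X \<inter> e2))"
    using assms(11) fin by (intro card_Un_disjoint[symmetric]) auto
  also have "\<dots> \<le> card ?X" using fin by (intro card_mono) auto
  also have "\<dots> = 2*k - 2*l - 3" using assms(5) i0(1) by auto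
  finally show False using i0(3) i2(3) i02 assms(1,2) by simp
qed

theorem fact3p1:
  fixes k l n :: nat and A B :: "nat \<Rightarrow> 'a set" and vs :: "'a list"
  assumes "2 \<le> l" and "2*l < k" and "1 \<le> n"
    and "\<forall>i\<in>{1..2*n}. finite (A i) \<and> finite (B i)"
    and "\<forall>i\<in>{1..2*n}. \<forall>j\<in>{1..2*n}. A i \<inter> B j = {}"
    and "\<forall>i\<in>{1..2*n}. \<forall>j\<in>{1..2*n}. i \<noteq> j \<longrightarrow> A i \<inter> A j = {} \<and> B i \<inter> B j = {}"
    and "\<forall>i\<in>{1..n}. card (A i) = 2*(k div 2) + l"
    and "\<forall>i\<in>{n+1..2*n}. card (A i) = 2*k - 2*l - 3"
    and "is_lk_path l k vs"
    and "path_edges l k vs \<subseteq> H12 k l n A B"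
  shows "card (path_edges l k vs) \<le> 2"
proof (rule ccontr)
  assume "\<not> card (path_edges l k vs) \<le> 2"
  hence "2 < card (path_edges l k vs)" by simp
  moreover have "0 < l" using assms(1) by simp
  ultimately obtain e0 e1 e2 where "e0 \<in> path_edges l k vs" "e1 \<in> path_edges l k vs"
      "e2 \<in> path_edges l k vs" and meet: "e0 \<inter> e1 \<noteq> {}" "e1 \<inter> e2 \<noteq> {}" "e0 \<inter> e2 = {}"
    using path_edges_three_consecutive[OF assms(9) _ assms(2)] by blast
  hence "e0 \<in> H12 k l n A B" "e1 \<in> H12 k l n A B" "e2 \<in> H12 k l n A B"
    using assms(10) by auto
  from H12_no_three_consecutive[OF assms(1,2,4,6,8) this meet] show False .
qed

end
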